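(* There exists $M>0$ such that $$\inf_{\lambda\ge M,\ \beta>0}\left[\rho\,\phi(a)+\gamma\,\Phi(a)+\frac{2\gamma\,\phi(a)}{3\sqrt{n}}+\frac{\gamma}{12n-1}\right]>0,$$ where $n,\rho,a,\gamma$ are the functions of $(\beta,\lambda)$ defined in the context.
   Context: $\phi$ and $\Phi$ denote the standard normal density and distribution function. For $\lambda>0$ and $\beta\ge 0$ set $n=\lambda+\beta\sqrt{\lambda}$, $\rho=\lambda/n$, $a=\sqrt{-2n(1-\rho+\ln\rho)}$ (note $1-\rho+\ln\rho\le 0$), and $\gamma=(n-\lambda)/\sqrt{n}=\beta\sqrt{\rho}$. *)

theory Defs
  imports "HOL-Probability.Probability"
begin

definition phi :: "real \<Rightarrow> real" where
  "phi x = std_normal_density x"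

definition Phi :: "real \<Rightarrow> real" where
  "Phi x = measure (density lborel std_normal_density) {..x}"

definition nn :: "real \<Rightarrow> real \<Rightarrow> real" where
  "nn lam bet = lam + bet * sqrt lam"

definition rho :: "real \<Rightarrow> real \<Rightarrow> real" where
  "rho lam bet = lam / nn lam bet"

definition aa :: "real \<Rightarrow> real \<Rightarrow> real" where
  "aa lam bet = sqrt (- 2 * nn lam bet * (1 - rho lam bet + ln (rho lam bet)))"

definition gam :: "real \<Rightarrow> real \<Rightarrow> real" where
  "gam lam bet = (nn lam bet - lam) / sqrt (nn lam bet)"

definition F :: "real \<Rightarrow> real \<Rightarrow> real" where
  "F lam bet = rho lam bet * phi (aa lam bet) + gam lam bet * Phi (aa lam bet)
     + 2 * gam lam bet * phi (aa lam bet) / (3 * sqrt (nn lam bet))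
     + gam lam bet / (12 * nn lam bet - 1)"

end

theory Submission imports Defs begin

text \<open>With \<open>s = \<surd>\<lambda>\<close> one has \<open>n = s (s + \<beta>)\<close>, \<open>\<rho> = s / (s + \<beta>)\<close>, \<open>\<gamma> = \<beta> \<surd>\<rho>\<close>,
  and \<open>ln \<rho> \<ge> 1 - 1/\<rho>\<close> gives \<open>a\<^sup>2 \<le> 2 n (1 - \<rho>)\<^sup>2 / \<rho> = 2 \<beta>\<^sup>2\<close>.
  All four terms of \<open>F\<close> are nonnegative. If \<open>\<gamma> \<ge> 1\<close>, the term \<open>\<gamma> \<Phi>(a) \<ge> \<Phi>(0) \<ge> \<phi>(1)\<close>
  is bounded below. If \<open>\<gamma> < 1\<close> and \<open>\<lambda> \<ge> 1\<close>, then \<open>\<beta> < 2\<close>, hence \<open>\<rho> \<ge> 1/3\<close> and \<open>a \<le> 3\<close>,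
  so the term \<open>\<rho> \<phi>(a)\<close> is bounded below.\<close>

lemma phi_pos: "phi x > 0"
  unfolding phi_def by (simp add: normal_density_pos)

lemma phi_antimono_abs:
  assumes "\<bar>x\<bar> \<le> \<bar>y\<bar>"
  shows "phi y \<le> phi x"
proof -
  have "x\<^sup>2 \<le> y\<^sup>2" using assms by (simp add: abs_le_square_iff)
  then show ?thesis unfolding phi_def std_normal_density_def by (auto intro!: divide_right_mono)
qed

lemma Phi_nonneg: "Phi x \<ge> 0"
  unfolding Phi_def by simp

lemma phi_1_le_Phi:
  assumes "0 \<le> x"
  shows "phi 1 \<le> Phi x"
proof -
  let ?M = "density lborel std_normal_density"
  interpret P: prob_space ?M using prob_space_normal_density by simp
  have "ennreal (phi 1) = (\<integral>\<^sup>+t. ennreal (phi 1) * indicator {-1..0::real} t \<partial>lborel)"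
    by (simp add: nn_integral_cmult_indicator)
  also have "\<dots> \<le> (\<integral>\<^sup>+t. ennreal (std_normal_density t) * indicator {-1..0} t \<partial>lborel)"
  proof (intro nn_integral_mono)
    fix t :: real
    have "t \<in> {-1..0} \<Longrightarrow> phi 1 \<le> std_normal_density t"
      using phi_antimono_abs[of t 1] by (simp add: phi_def)
    then show "ennreal (phi 1) * indicator {-1..0} t \<le> ennreal (std_normal_density t) * indicator {-1..0} t"
      by (auto simp: indicator_def intro: ennreal_leI)
  qed
  also have "\<dots> = emeasure ?M {-1..0}"
    by (subst emeasure_density) auto
  finally have "phi 1 \<le> measure ?M {-1..0}"
    by (simp add: P.emeasure_eq_measure phi_def)
  also have "\<dots> \<le> measure ?M {..x}"
    using assms by (intro P.finite_measure_mono) auto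
  finally show ?thesis unfolding Phi_def .
qed

lemma ln_ge_one_minus_inverse:
  fixes r :: real
  assumes "0 < r"
  shows "r - 1 - ln r \<le> (1 - r)\<^sup>2 / r"
proof -
  have "- ln r \<le> 1 / r - 1" using ln_le_minus_one[of "1 / r"] assms by (simp add: ln_div)
  then show ?thesis using assms by (simp add: field_simps power2_eq_square)
qed

lemma nn_eq:
  assumes "0 \<le> lam"
  shows "nn lam bet = sqrt lam * (sqrt lam + bet)"
  using assms unfolding nn_def by (simp add: algebra_simps)

lemma nn_pos:
  assumes "0 < lam" "0 \<le> bet"
  shows "0 < nn lam bet"
  using assms by (simp add: nn_eq add_pos_nonneg)

lemma rho_eq:
  assumes "0 < lam" "0 \<le> bet"
  shows "rho lam bet = sqrt lam / (sqrt lam + bet)"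
proof -
  have "lam = sqrt lam * sqrt lam" using assms by simp
  then show ?thesis using assms unfolding rho_def nn_eq[OF less_imp_le[OF assms(1)]]
    by (metis mult_divide_mult_cancel_left_if real_sqrt_gt_0_iff order.strict_iff_not)
qed

lemma rho_pos:
  assumes "0 < lam" "0 \<le> bet"
  shows "0 < rho lam bet"
  using assms by (simp add: rho_eq add_pos_nonneg)

lemma gam_eq: "gam lam bet = bet * sqrt (rho lam bet)"
  unfolding gam_def rho_def nn_def by (simp add: real_sqrt_divide)

lemma gam_nonneg:
  assumes "0 < lam" "0 \<le> bet"
  shows "0 \<le> gam lam bet"
  using assms by (simp add: gam_eq rho_pos less_imp_le)

lemma nn_one_minus_rho_sq:
  assumes "0 < lam" "0 \<le> bet"
  shows "nn lam bet * (1 - rho lam bet)\<^sup>2 / rho lam bet = bet\<^sup>2"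
proof -
  have "0 < nn lam bet" using assms by (rule nn_pos)
  then have "nn lam bet * (1 - rho lam bet)\<^sup>2 / rho lam bet = (nn lam bet - lam)\<^sup>2 / lam"
    using assms by (simp add: rho_def field_simps power2_eq_square)
  also have "(nn lam bet - lam)\<^sup>2 = bet\<^sup>2 * lam"
    using assms by (simp add: nn_def power_mult_distrib)
  finally show ?thesis using assms by simp
qed

lemma aa_sq:
  assumes "0 < lam" "0 \<le> bet"
  shows "(aa lam bet)\<^sup>2 = 2 * nn lam bet * (rho lam bet - 1 - ln (rho lam bet))"
    and "0 \<le> aa lam bet"
proof -
  let ?n = "nn lam bet" and ?r = "rho lam bet"
  have "0 < ?n" "0 < ?r" using assms by (simp_all add: nn_pos rho_pos)
  have "0 \<le> ?r - 1 - ln ?r" using ln_le_minus_one[OF \<open>0 < ?r\<close>] by simp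
  then have "0 \<le> 2 * ?n * (?r - 1 - ln ?r)" using \<open>0 < ?n\<close> by simp
  moreover have "aa lam bet = sqrt (2 * ?n * (?r - 1 - ln ?r))"
    unfolding aa_def by (simp add: algebra_simps)
  ultimately show "(aa lam bet)\<^sup>2 = 2 * ?n * (?r - 1 - ln ?r)" and "0 \<le> aa lam bet"
    by simp_all
qed

lemma aa_sq_le:
  assumes "0 < lam" "0 \<le> bet"
  shows "(aa lam bet)\<^sup>2 \<le> 2 * bet\<^sup>2"
proof -
  let ?n = "nn lam bet" and ?r = "rho lam bet"
  have "0 < ?n" "0 < ?r" using assms by (simp_all add: nn_pos rho_pos)
  have "(aa lam bet)\<^sup>2 = 2 * ?n * (?r - 1 - ln ?r)" using assms by (rule aa_sq)
  also have "\<dots> \<le> 2 * ?n * ((1 - ?r)\<^sup>2 / ?r)"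
    using \<open>0 < ?n\<close> ln_ge_one_minus_inverse[OF \<open>0 < ?r\<close>] by (intro mult_left_mono) auto
  also have "\<dots> = 2 * bet\<^sup>2"
    using nn_one_minus_rho_sq[OF assms] by simp
  finally show ?thesis .
qed

lemma bet_lt_2_if_gam_lt_1:
  assumes "1 \<le> lam" "0 < bet" "gam lam bet < 1"
  shows "bet < 2"
proof (rule ccontr)
  assume "\<not> bet < 2"
  define s where "s = sqrt lam"
  have "1 \<le> s" using assms by (simp add: s_def)
  have "s \<le> bet * s" using mult_right_mono[of 1 bet s] \<open>\<not> bet < 2\<close> \<open>1 \<le> s\<close> by simp
  moreover have "bet \<le> bet * s" using mult_left_mono[of 1 s bet] assms \<open>1 \<le> s\<close> by simp
  ultimately have "s + bet \<le> bet * s + bet * s" by simp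
  also have "\<dots> \<le> bet\<^sup>2 * s" using \<open>\<not> bet < 2\<close> \<open>1 \<le> s\<close> by (simp add: power2_eq_square)
  finally have "1 \<le> bet\<^sup>2 * (s / (s + bet))" using \<open>1 \<le> s\<close> assms by (simp add: field_simps)
  also have "\<dots> = (gam lam bet)\<^sup>2"
    using assms by (simp add: gam_eq rho_eq rho_pos power_mult_distrib less_imp_le s_def)
  moreover have "gam lam bet * gam lam bet < 1 * 1"
    using assms gam_nonneg[of lam bet] by (intro mult_strict_mono) auto
  ultimately show False by (simp add: power2_eq_square)
qed

lemma rho_ge_one_third:
  assumes "1 \<le> lam" "0 \<le> bet" "bet < 2"
  shows "1 / 3 \<le> rho lam bet"
proof -
  have "1 \<le> sqrt lam" using assms by simp
  have "sqrt lam / (3 * sqrt lam) \<le> sqrt lam / (sqrt lam + bet)"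
  proof (rule divide_left_mono)
    show "sqrt lam + bet \<le> 3 * sqrt lam" using \<open>1 \<le> sqrt lam\<close> \<open>bet < 2\<close> by linarith
    show "0 \<le> sqrt lam" using \<open>1 \<le> sqrt lam\<close> by linarith
    show "0 < 3 * sqrt lam * (sqrt lam + bet)"
      using \<open>1 \<le> sqrt lam\<close> \<open>0 \<le> bet\<close> by (intro mult_pos_pos) linarith+
  qed
  then show ?thesis using assms by (simp add: rho_eq)
qed

lemma aa_le_3:
  assumes "0 < lam" "0 \<le> bet" "bet < 2"
  shows "aa lam bet \<le> 3"
proof -
  have "bet\<^sup>2 < 2\<^sup>2" using assms by (intro power_strict_mono) auto
  then have "(aa lam bet)\<^sup>2 < 3\<^sup>2" using aa_sq_le[OF assms(1,2)] by simp
  then show ?thesis using power_less_imp_less_base[of "aa lam bet" 2 3] by simp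
qed

lemma F_ge:
  assumes "1 \<le> lam" "0 < bet"
  shows "min (phi 1) (phi 3 / 3) \<le> F lam bet"
proof -
  have lam: "0 < lam" and bet: "0 \<le> bet" using assms by simp_all
  let ?n = "nn lam bet" and ?r = "rho lam bet" and ?a = "aa lam bet" and ?g = "gam lam bet"
  have "0 < ?r" "0 \<le> ?g" using rho_pos gam_nonneg lam bet by auto
  have "1 \<le> ?n" using assms by (simp add: nn_def add_increasing2)
  have "0 \<le> ?a" using lam bet by (rule aa_sq)
  have terms: "0 \<le> ?r * phi ?a" "0 \<le> ?g * Phi ?a" "0 \<le> 2 * ?g * phi ?a / (3 * sqrt ?n)"
    "0 \<le> ?g / (12 * ?n - 1)"
    using \<open>0 < ?r\<close> \<open>0 \<le> ?g\<close> \<open>1 \<le> ?n\<close> phi_pos[of ?a] Phi_nonneg[of ?a] by simp_all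
  show ?thesis
  proof (cases "1 \<le> ?g")
    case True
    have "phi 1 \<le> ?g * Phi ?a"
      using True phi_1_le_Phi[OF \<open>0 \<le> ?a\<close>] mult_mono[of 1 ?g "phi 1" "Phi ?a"] phi_pos[of 1]
      by simp
    then show ?thesis using terms unfolding F_def by linarith
  next
    case False
    then have "bet < 2" using bet_lt_2_if_gam_lt_1 assms by simp
    have "1 / 3 \<le> ?r" using assms \<open>bet < 2\<close> by (intro rho_ge_one_third) auto
    have "phi 3 \<le> phi ?a"
      using aa_le_3[OF lam bet \<open>bet < 2\<close>] \<open>0 \<le> ?a\<close> by (intro phi_antimono_abs) simp
    then have "phi 3 / 3 \<le> ?r * phi ?a"
      using \<open>1 / 3 \<le> ?r\<close> mult_mono[of "1/3" ?r "phi 3" "phi ?a"] phi_pos[of 3] by simp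
    then show ?thesis using terms unfolding F_def by linarith
  qed
qed

theorem lemma4:
  shows "\<exists>M>0. \<exists>c>0. \<forall>lam bet. lam \<ge> M \<longrightarrow> bet > 0 \<longrightarrow> F lam bet \<ge> c"
  using F_ge phi_pos by (intro exI[of _ 1] conjI exI[of _ "min (phi 1) (phi 3 / 3)"]) auto

end
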